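(* Let $p\ge2$, $n\ge1$, $\sigma>0$, $a>0$, let $\beta\in\mathbb{R}^p$ be fixed with support $S_0=\{j:\beta_j\ne0\}$ of size $k\ge1$. Let $X\in\mathbb{R}^{n\times p}$ have independent mean-zero entries with $\mathrm{E}e^{tX_{\ell j}}\le e^{t^2/2}$ for all $t$, let $\epsilon$ be independent of $X$ with independent mean-zero entries satisfying $\mathrm{E}e^{t\epsilon_\ell}\le e^{\sigma^2t^2/2}$, and $Y=X\beta+\epsilon$. Fix $\lambda_{max}\ge\lambda_{min}>0$, $\lambda>0$, and let $\mathcal{E}_{cond}$ be the event that some eigenvalue of $X_{S_0}^{\mathrm T}X_{S_0}/n$ lies outside $[\lambda_{min},\lambda_{max}]$ or $\|\epsilon\|^2/n>\sigma^2\lambda$. Let $\tau=\sqrt{2(1+a)\log p}$, let $\hat\beta_{ls}$ be the least squares coefficient vector of $Y$ regressed on $X_{S_0}$, $c_0=1/\sqrt{\lambda_{min}}$, and $\mathcal{E}_{ls}=\{\|\hat\beta_{ls}-\beta_{S_0}\|_\infty>\sigma c_0\tau/\sqrt n\}$. Then $\mathbb{P}(\mathcal{E}_{ls}\cap\mathcal{E}_{cond}^c)\le2k/p^{1+a}$.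
   Context: $X_{S_0}$ is the submatrix of columns indexed by $S_0$ and $\beta_{S_0}$ the corresponding subvector. *)

theory Defs
  imports "HOL-Probability.Probability"
begin

definition eigenvalue_on :: "nat set \<Rightarrow> (nat \<Rightarrow> nat \<Rightarrow> real) \<Rightarrow> real \<Rightarrow> bool" where
  "eigenvalue_on S A \<mu> \<longleftrightarrow>
     (\<exists>v :: nat \<Rightarrow> real. (\<forall>j. j \<notin> S \<longrightarrow> v j = 0) \<and> (\<exists>j\<in>S. v j \<noteq> 0) \<and>
        (\<forall>i\<in>S. (\<Sum>j\<in>S. A i j * v j) = \<mu> * v i))"

definition rss :: "nat \<Rightarrow> nat set \<Rightarrow> (nat \<Rightarrow> nat \<Rightarrow> real) \<Rightarrow> (nat \<Rightarrow> real) \<Rightarrow> (nat \<Rightarrow> real) \<Rightarrow> real" where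
  "rss n S Xd Y b = (\<Sum>l<n. (Y l - (\<Sum>j\<in>S. Xd l j * b j))\<^sup>2)"

definition is_ls :: "nat \<Rightarrow> nat set \<Rightarrow> (nat \<Rightarrow> nat \<Rightarrow> real) \<Rightarrow> (nat \<Rightarrow> real) \<Rightarrow> (nat \<Rightarrow> real) \<Rightarrow> bool" where
  "is_ls n S Xd Y b \<longleftrightarrow> (\<forall>j. j \<notin> S \<longrightarrow> b j = 0) \<and>
     (\<forall>b'. (\<forall>j. j \<notin> S \<longrightarrow> b' j = 0) \<longrightarrow> rss n S Xd Y b \<le> rss n S Xd Y b')"

text \<open>The least squares coefficient vector (unique when the Gram matrix is invertible).\<close>
definition ls_coef :: "nat \<Rightarrow> nat set \<Rightarrow> (nat \<Rightarrow> nat \<Rightarrow> real) \<Rightarrow> (nat \<Rightarrow> real) \<Rightarrow> nat \<Rightarrow> real" where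
  "ls_coef n S Xd Y = (THE b. is_ls n S Xd Y b)"

end

(*
  On the event that every eigenvalue of the Gram matrix G = X_S^T X_S / n is at least lmin, the
  Rayleigh quotient shows that G is positive definite, so least squares is unique and its error
  in coordinate j is the linear form sum_l w_jl eps_l, with weights w_j = (row j of G^-1 X_S^T) / n
  that depend on X only and satisfy sum_l w_jl^2 = (G^-1)_jj / n <= 1 / (n lmin). Conditionally on
  X the noise is independent and sub-Gaussian, so a Chernoff bound for a sub-Gaussian linear form
  with bounded weights gives probability at most 2 exp(-t^2 / (2 sigma^2 V)), which is 2 / p^(1+a)
  at the threshold t = sigma tau / sqrt (n lmin). A union bound over the k coordinates finishes.
*)

theory Submission
  imports Defs Jordan_Normal_Form.Determinant
begin

definition quad_form :: "'i set \<Rightarrow> ('i \<Rightarrow> 'i \<Rightarrow> real) \<Rightarrow> ('i \<Rightarrow> real) \<Rightarrow> real" where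
  "quad_form S A v = (\<Sum>i\<in>S. \<Sum>j\<in>S. A i j * v i * v j)"

lemma quad_form_eq_inner: "quad_form S A v = (\<Sum>i\<in>S. v i * (\<Sum>j\<in>S. A i j * v j))"
  unfolding quad_form_def by (simp add: sum_distrib_left algebra_simps)

lemma quad_form_scale: "quad_form S A (\<lambda>i. r * v i) = r\<^sup>2 * quad_form S A v"
  unfolding quad_form_def by (simp add: sum_distrib_left algebra_simps power2_eq_square)

lemma quad_form_add_scaled:
  assumes sym: "\<And>i j. i \<in> S \<Longrightarrow> j \<in> S \<Longrightarrow> A i j = A j i"
  shows "quad_form S A (\<lambda>i. v i + t * g i) =
     quad_form S A v + 2 * t * (\<Sum>i\<in>S. g i * (\<Sum>j\<in>S. A i j * v j)) + t\<^sup>2 * quad_form S A g"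
proof -
  have cross: "(\<Sum>i\<in>S. \<Sum>j\<in>S. A i j * v i * g j) = (\<Sum>i\<in>S. g i * (\<Sum>j\<in>S. A i j * v j))"
  proof -
    have "(\<Sum>i\<in>S. \<Sum>j\<in>S. A i j * v i * g j) = (\<Sum>j\<in>S. \<Sum>i\<in>S. A i j * v i * g j)"
      by (rule sum.swap)
    also have "\<dots> = (\<Sum>j\<in>S. g j * (\<Sum>i\<in>S. A j i * v i))"
      by (auto simp: sum_distrib_left sym intro!: sum.cong)
    finally show ?thesis .
  qed
  have "quad_form S A (\<lambda>i. v i + t * g i) = quad_form S A v
      + t * (\<Sum>i\<in>S. \<Sum>j\<in>S. A i j * v i * g j) + t * (\<Sum>i\<in>S. \<Sum>j\<in>S. A i j * g i * v j)
      + t\<^sup>2 * quad_form S A g"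
    unfolding quad_form_def
    by (simp add: sum.distrib sum_distrib_left algebra_simps power2_eq_square)
  also have "(\<Sum>i\<in>S. \<Sum>j\<in>S. A i j * g i * v j) = (\<Sum>i\<in>S. g i * (\<Sum>j\<in>S. A i j * v j))"
    by (simp add: sum_distrib_left algebra_simps)
  finally show ?thesis using cross by simp
qed

lemma sum_squares_eq_0_iff:
  fixes v :: "'i \<Rightarrow> real"
  assumes "finite S"
  shows "(\<Sum>i\<in>S. (v i)\<^sup>2) = 0 \<longleftrightarrow> (\<forall>i\<in>S. v i = 0)"
  using sum_nonneg_eq_0_iff[OF assms, of "\<lambda>i. (v i)\<^sup>2"] by simp

lemma linear_coeff_eq_0_if_quadratic_nonneg:
  fixes b c :: real
  assumes "\<And>t. 0 \<le> b * t + c * t\<^sup>2"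
  shows "b = 0"
proof (rule ccontr)
  assume "b \<noteq> 0"
  define d where "d = \<bar>c\<bar> + 1"
  have d: "d > 0" "c < d" unfolding d_def by auto
  have "b * (- b / d) + c * (- b / d)\<^sup>2 = b\<^sup>2 / d * (c / d - 1)"
    using d by (simp add: field_simps power2_eq_square)
  also have "\<dots> < 0"
    using \<open>b \<noteq> 0\<close> d by (intro mult_pos_neg) auto
  finally show False using assms[of "- b / d"] by simp
qed

lemma quad_form_attains_min_on_unit_sphere:
  fixes A :: "nat \<Rightarrow> nat \<Rightarrow> real"
  assumes fin: "finite S" and ne: "S \<noteq> {}"
  obtains v where "(\<Sum>i\<in>S. (v i)\<^sup>2) = 1"
    and "\<And>u. (\<Sum>i\<in>S. (u i)\<^sup>2) = 1 \<Longrightarrow> quad_form S A v \<le> quad_form S A u"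
proof -
  define N where "N = (\<lambda>v::nat\<Rightarrow>real. \<Sum>i\<in>S. (v i)\<^sup>2)"
  define T where "T = product_topology (\<lambda>_. euclideanreal) S"
  define K where "K = {x \<in> topspace T. N x = 1}"
  have "compactin T K"
  proof (rule closed_compactin)
    show "compactin T (PiE S (\<lambda>_. {-1..1}))"
      unfolding T_def by (simp add: compactin_PiE)
    have "continuous_map T euclideanreal N"
      unfolding N_def T_def using fin
      by (intro continuous_map_sum continuous_map_real_pow continuous_map_product_projection) auto
    then show "closedin T K"
      unfolding K_def using closedin_continuous_map_preimage[of T euclideanreal N "{1}"] by simp
    show "K \<subseteq> PiE S (\<lambda>_. {-1..1})"
    proof
      fix x assume x: "x \<in> K"
      have "\<bar>x i\<bar> \<le> 1" if "i \<in> S" for i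
      proof -
        have "(x i)\<^sup>2 \<le> N x" unfolding N_def by (rule member_le_sum[OF that]) (auto simp: fin)
        then show ?thesis using x abs_le_square_iff[of "x i" 1] by (simp add: K_def)
      qed
      then show "x \<in> PiE S (\<lambda>_. {-1..1})" using x by (auto simp: K_def T_def PiE_def abs_le_iff)
    qed
  qed
  moreover have "continuous_map T euclideanreal (quad_form S A)"
    unfolding quad_form_def T_def using fin
    by (intro continuous_map_sum continuous_map_real_mult continuous_map_product_projection) auto
  ultimately have "compact (quad_form S A ` K)"
    using image_compactin by fastforce
  moreover obtain i0 where "i0 \<in> S" using ne by blast
  then have "N (restrict (\<lambda>i. if i = i0 then 1 else 0) S) = 1"
    using fin unfolding N_def by (subst sum.cong[OF refl, of _ _ "\<lambda>i. if i = i0 then 1 else 0"]) auto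
  then have "restrict (\<lambda>i. if i = i0 then 1 else 0) S \<in> K" by (simp add: K_def T_def)
  ultimately obtain v where v: "v \<in> K" and vmin: "\<And>u. u \<in> K \<Longrightarrow> quad_form S A v \<le> quad_form S A u"
    using compact_attains_inf[of "quad_form S A ` K"] by blast
  show thesis
  proof
    show "(\<Sum>i\<in>S. (v i)\<^sup>2) = 1" using v by (simp add: K_def N_def)
    fix u :: "nat \<Rightarrow> real" assume "(\<Sum>i\<in>S. (u i)\<^sup>2) = 1"
    then have "restrict u S \<in> K" by (simp add: K_def T_def N_def)
    moreover have "quad_form S A (restrict u S) = quad_form S A u"
      unfolding quad_form_def by (intro sum.cong) auto
    ultimately show "quad_form S A v \<le> quad_form S A u" using vmin by metis
  qed
qed

lemma quad_form_ge_if_ge_on_unit_sphere: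
  fixes A :: "'i \<Rightarrow> 'i \<Rightarrow> real"
  assumes "finite S" and sphere: "\<And>u. (\<Sum>i\<in>S. (u i)\<^sup>2) = 1 \<Longrightarrow> m \<le> quad_form S A u"
  shows "m * (\<Sum>i\<in>S. (u i)\<^sup>2) \<le> quad_form S A u"
proof (cases "(\<Sum>i\<in>S. (u i)\<^sup>2) = 0")
  case True
  then show ?thesis using assms(1) by (simp add: sum_squares_eq_0_iff quad_form_def)
next
  case False
  define N where "N = (\<Sum>i\<in>S. (u i)\<^sup>2)"
  have "N > 0" using False by (simp add: N_def order_neq_le_trans sum_nonneg)
  define r where "r = 1 / sqrt N"
  have r2: "r\<^sup>2 = 1 / N" unfolding r_def using \<open>N > 0\<close> by (simp add: power_divide)
  have "(\<Sum>i\<in>S. (r * u i)\<^sup>2) = r\<^sup>2 * N"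
    by (simp add: N_def power_mult_distrib sum_distrib_left)
  then have "m \<le> quad_form S A (\<lambda>i. r * u i)"
    using r2 \<open>N > 0\<close> by (intro sphere) simp
  then have "m \<le> quad_form S A u / N"
    using r2 by (simp add: quad_form_scale)
  then show ?thesis using \<open>N > 0\<close> by (simp add: N_def pos_le_divide_eq)
qed

text \<open>A minimiser of the Rayleigh quotient is an eigenvector: perturbing it in the direction
  of its residual would otherwise decrease the quotient.\<close>
lemma eigenvalue_on_min_quad_form:
  fixes A :: "nat \<Rightarrow> nat \<Rightarrow> real"
  assumes fin: "finite S" and sym: "\<And>i j. i \<in> S \<Longrightarrow> j \<in> S \<Longrightarrow> A i j = A j i"
    and norm: "(\<Sum>i\<in>S. (v i)\<^sup>2) = 1"
    and min: "\<And>u. quad_form S A v * (\<Sum>i\<in>S. (u i)\<^sup>2) \<le> quad_form S A u"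
  shows "eigenvalue_on S A (quad_form S A v)"
proof -
  define m where "m = quad_form S A v"
  define g where "g = (\<lambda>i. (\<Sum>j\<in>S. A i j * v j) - m * v i)"
  define N where "N = (\<lambda>u::nat\<Rightarrow>real. \<Sum>i\<in>S. (u i)\<^sup>2)"
  have "(\<Sum>i\<in>S. g i * (\<Sum>j\<in>S. A i j * v j)) = (\<Sum>i\<in>S. g i * (g i + m * v i))"
    by (simp add: g_def)
  then have gAv: "(\<Sum>i\<in>S. g i * (\<Sum>j\<in>S. A i j * v j)) = N g + m * (\<Sum>i\<in>S. g i * v i)"
    by (simp add: N_def sum.distrib sum_distrib_left power2_eq_square algebra_simps)
  have "0 \<le> 2 * N g * t + (quad_form S A g - m * N g) * t\<^sup>2" for t
  proof -
    have "N (\<lambda>i. v i + t * g i) = 1 + 2 * t * (\<Sum>i\<in>S. g i * v i) + t\<^sup>2 * N g"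
      using norm unfolding N_def
      by (simp add: sum.distrib sum_distrib_left power2_eq_square algebra_simps)
    then show ?thesis
      using min[of "\<lambda>i. v i + t * g i"] quad_form_add_scaled[OF sym, where v=v and t=t and g=g] gAv
      by (simp add: N_def m_def algebra_simps)
  qed
  then have "2 * N g = 0" by (rule linear_coeff_eq_0_if_quadratic_nonneg)
  then have g0: "\<forall>i\<in>S. g i = 0" using fin by (simp add: N_def sum_squares_eq_0_iff)
  have "\<exists>j\<in>S. v j \<noteq> 0" using norm sum_squares_eq_0_iff[OF fin, of v] by auto
  then show ?thesis
    unfolding eigenvalue_on_def m_def[symmetric] using g0
    by (intro exI[of _ "\<lambda>j. if j \<in> S then v j else 0"]) (auto simp: g_def)
qed

lemma quad_form_ge_if_eigenvalues_ge:
  fixes A :: "nat \<Rightarrow> nat \<Rightarrow> real"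
  assumes "finite S" and "\<And>i j. i \<in> S \<Longrightarrow> j \<in> S \<Longrightarrow> A i j = A j i"
    and eig: "\<And>\<mu>. eigenvalue_on S A \<mu> \<Longrightarrow> c \<le> \<mu>"
  shows "c * (\<Sum>i\<in>S. (u i)\<^sup>2) \<le> quad_form S A u"
proof (cases "S = {}")
  case False
  obtain v where v: "(\<Sum>i\<in>S. (v i)\<^sup>2) = 1"
    and vmin: "\<And>u. (\<Sum>i\<in>S. (u i)\<^sup>2) = 1 \<Longrightarrow> quad_form S A v \<le> quad_form S A u"
    using quad_form_attains_min_on_unit_sphere[OF assms(1) False] by metis
  note rayleigh = quad_form_ge_if_ge_on_unit_sphere[OF assms(1) vmin]
  have "c \<le> quad_form S A v" by (rule eig[OF eigenvalue_on_min_quad_form[OF assms(1,2) v rayleigh]])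
  then have "c * (\<Sum>i\<in>S. (u i)\<^sup>2) \<le> quad_form S A v * (\<Sum>i\<in>S. (u i)\<^sup>2)"
    by (simp add: mult_right_mono sum_nonneg)
  also have "\<dots> \<le> quad_form S A u" by (rule rayleigh)
  finally show ?thesis .
qed (simp add: quad_form_def)

lemma rss_eq_of_normal_equations:
  fixes x :: "nat \<Rightarrow> nat \<Rightarrow> real"
  assumes normal: "\<And>j. j \<in> S \<Longrightarrow> (\<Sum>l<n. x l j * (Y l - (\<Sum>j'\<in>S. x l j' * b0 j'))) = 0"
  shows "rss n S x Y b = rss n S x Y b0 + (\<Sum>l<n. (\<Sum>j\<in>S. x l j * (b j - b0 j))\<^sup>2)"
proof -
  define r where "r = (\<lambda>l. Y l - (\<Sum>j\<in>S. x l j * b0 j))"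
  define z where "z = (\<lambda>l. \<Sum>j\<in>S. x l j * (b j - b0 j))"
  have "(\<Sum>l<n. r l * z l) = (\<Sum>j\<in>S. (b j - b0 j) * (\<Sum>l<n. x l j * r l))"
    unfolding z_def sum_distrib_left sum_distrib_right by (subst sum.swap) (simp add: algebra_simps)
  also have "\<dots> = 0" using normal by (simp add: r_def)
  finally have orth: "(\<Sum>l<n. r l * z l) = 0" .
  have "Y l - (\<Sum>j\<in>S. x l j * b j) = r l - z l" for l
    by (simp add: r_def z_def sum_subtractf right_diff_distrib)
  then have "rss n S x Y b = (\<Sum>l<n. (r l - z l)\<^sup>2)" by (simp add: rss_def)
  also have "\<dots> = (\<Sum>l<n. (r l)\<^sup>2) - 2 * (\<Sum>l<n. r l * z l) + (\<Sum>l<n. (z l)\<^sup>2)"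
    by (simp add: power2_diff sum.distrib sum_subtractf sum_distrib_left algebra_simps)
  finally show ?thesis using orth by (simp add: rss_def r_def z_def)
qed

lemma ls_coef_eq_of_normal_equations:
  fixes x :: "nat \<Rightarrow> nat \<Rightarrow> real"
  assumes supp: "\<And>j. j \<notin> S \<Longrightarrow> b0 j = 0"
    and normal: "\<And>j. j \<in> S \<Longrightarrow> (\<Sum>l<n. x l j * (Y l - (\<Sum>j'\<in>S. x l j' * b0 j'))) = 0"
    and full_rank: "\<And>d. (\<Sum>l<n. (\<Sum>j\<in>S. x l j * d j)\<^sup>2) = 0 \<Longrightarrow> \<forall>j\<in>S. d j = 0"
  shows "ls_coef n S x Y = b0"
  unfolding ls_coef_def
proof (rule the_equality)
  show "is_ls n S x Y b0"
    unfolding is_ls_def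
  proof (intro conjI allI impI)
    fix b :: "nat \<Rightarrow> real"
    have "0 \<le> (\<Sum>l<n. (\<Sum>j\<in>S. x l j * (b j - b0 j))\<^sup>2)" by (rule sum_nonneg) simp
    then show "rss n S x Y b0 \<le> rss n S x Y b"
      using rss_eq_of_normal_equations[OF normal, of b] by linarith
  qed (use supp in blast)
  fix b assume "is_ls n S x Y b"
  then have supp_b: "\<And>j. j \<notin> S \<Longrightarrow> b j = 0" and "rss n S x Y b \<le> rss n S x Y b0"
    using supp unfolding is_ls_def by blast+
  then have "(\<Sum>l<n. (\<Sum>j\<in>S. x l j * (b j - b0 j))\<^sup>2) \<le> 0"
    using rss_eq_of_normal_equations[OF normal, of b] by simp
  then have "(\<Sum>l<n. (\<Sum>j\<in>S. x l j * (b j - b0 j))\<^sup>2) = 0"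
    by (intro order_antisym sum_nonneg) simp_all
  then have on_S: "\<forall>j\<in>S. b j - b0 j = 0" by (rule full_rank)
  show "b = b0"
  proof
    fix j show "b j = b0 j" using on_S supp supp_b by (cases "j \<in> S") auto
  qed
qed

lemma eigenvalue_on_reindex:
  assumes bij: "bij_betw s {..<k} S" and ev: "eigenvalue_on {..<k} (\<lambda>i j. B (s i) (s j)) \<mu>"
  shows "eigenvalue_on S B \<mu>"
proof -
  obtain v where vnz: "\<exists>j<k. v j \<noteq> 0"
    and vev: "\<forall>i<k. (\<Sum>j<k. B (s i) (s j) * v j) = \<mu> * v i"
    using ev unfolding eigenvalue_on_def by auto
  define t where "t = inv_into {..<k} s"
  have ts: "\<And>r. r < k \<Longrightarrow> t (s r) = r" unfolding t_def
    using bij by (simp add: bij_betw_def inv_into_f_f)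
  have sS: "\<And>r. r < k \<Longrightarrow> s r \<in> S" and Ss: "\<And>j. j \<in> S \<Longrightarrow> \<exists>r<k. j = s r"
    using bij by (auto simp: bij_betw_def)
  define v' where "v' = (\<lambda>j. if j \<in> S then v (t j) else 0)"
  show ?thesis unfolding eigenvalue_on_def
  proof (intro exI[of _ v'] conjI allI impI ballI)
    show "\<exists>j\<in>S. v' j \<noteq> 0" using vnz sS ts unfolding v'_def by force
    fix i assume "i \<in> S"
    then obtain a where a: "a < k" "i = s a" using Ss by blast
    have "(\<Sum>j\<in>S. B i j * v' j) = (\<Sum>r<k. B i (s r) * v' (s r))"
      using sum.reindex_bij_betw[OF bij, of "\<lambda>j. B i j * v' j"] by simp
    also have "\<dots> = (\<Sum>r<k. B (s a) (s r) * v r)"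
      using a sS ts unfolding v'_def by (intro sum.cong) auto
    also have "\<dots> = \<mu> * v' i" using vev a sS ts unfolding v'_def by auto
    finally show "(\<Sum>j\<in>S. B i j * v' j) = \<mu> * v' i" .
  qed (simp add: v'_def)
qed

text \<open>The columns in \<open>S\<close> are enumerated as \<open>s 0, \<dots>, s (k - 1)\<close>. The inverse of the Gram
  matrix is written through the adjugate, which makes it an explicitly measurable function of
  the design.\<close>
definition gram :: "nat \<Rightarrow> (nat \<Rightarrow> nat) \<Rightarrow> (nat \<Rightarrow> nat \<Rightarrow> real) \<Rightarrow> nat \<Rightarrow> nat \<Rightarrow> real" where
  "gram n s x i j = (\<Sum>l<n. x l (s i) * x l (s j)) / real n"

definition gram_mat :: "nat \<Rightarrow> (nat \<Rightarrow> nat) \<Rightarrow> nat \<Rightarrow> (nat \<Rightarrow> nat \<Rightarrow> real) \<Rightarrow> real mat" where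
  "gram_mat n s k x = mat k k (\<lambda>(i, j). gram n s x i j)"

definition gram_inv :: "nat \<Rightarrow> (nat \<Rightarrow> nat) \<Rightarrow> nat \<Rightarrow> (nat \<Rightarrow> nat \<Rightarrow> real) \<Rightarrow> nat \<Rightarrow> nat \<Rightarrow> real" where
  "gram_inv n s k x i j = adj_mat (gram_mat n s k x) $$ (i, j) / det (gram_mat n s k x)"

text \<open>Row \<open>i\<close> of \<open>(X\<^sub>S\<^sup>T X\<^sub>S)\<^sup>-\<^sup>1 X\<^sub>S\<^sup>T\<close>: the least squares error in coordinate \<open>s i\<close> is
  \<open>\<Sum>l<n. ls_weight n s k x i l * \<epsilon> l\<close>.\<close>
definition ls_weight :: "nat \<Rightarrow> (nat \<Rightarrow> nat) \<Rightarrow> nat \<Rightarrow> (nat \<Rightarrow> nat \<Rightarrow> real) \<Rightarrow> nat \<Rightarrow> nat \<Rightarrow> real" where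
  "ls_weight n s k x i l = (\<Sum>r<k. gram_inv n s k x i r * x l (s r)) / real n"

lemma gram_sym: "gram n s x i j = gram n s x j i"
  unfolding gram_def by (simp add: mult.commute)

lemma gram_mat_carrier: "gram_mat n s k x \<in> carrier_mat k k"
  unfolding gram_mat_def by simp

lemma gram_gram_inv:
  assumes "det (gram_mat n s k x) \<noteq> 0" "i < k" "j < k"
  shows "(\<Sum>r<k. gram n s x i r * gram_inv n s k x r j) = (if i = j then 1 else 0)"
proof -
  let ?G = "gram_mat n s k x"
  have "(?G * adj_mat ?G) $$ (i, j) = (det ?G \<cdot>\<^sub>m 1\<^sub>m k) $$ (i, j)"
    using adj_mat(2)[OF gram_mat_carrier] by simp
  moreover have "(?G * adj_mat ?G) $$ (i, j) = (\<Sum>r<k. gram n s x i r * adj_mat ?G $$ (r, j))"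
    using assms adj_mat(1)[OF gram_mat_carrier, of n s k x]
    by (simp add: gram_mat_def scalar_prod_def atLeast0LessThan)
  ultimately show ?thesis
    using assms by (simp add: gram_inv_def sum_divide_distrib[symmetric])
qed

lemma gram_inv_gram:
  assumes "det (gram_mat n s k x) \<noteq> 0" "i < k" "j < k"
  shows "(\<Sum>r<k. gram_inv n s k x i r * gram n s x r j) = (if i = j then 1 else 0)"
proof -
  let ?G = "gram_mat n s k x"
  have "(adj_mat ?G * ?G) $$ (i, j) = (det ?G \<cdot>\<^sub>m 1\<^sub>m k) $$ (i, j)"
    using adj_mat(3)[OF gram_mat_carrier] by simp
  moreover have "(adj_mat ?G * ?G) $$ (i, j) = (\<Sum>r<k. adj_mat ?G $$ (i, r) * gram n s x r j)"
    using assms adj_mat(1)[OF gram_mat_carrier, of n s k x]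
    by (simp add: gram_mat_def scalar_prod_def atLeast0LessThan)
  ultimately show ?thesis
    using assms by (simp add: gram_inv_def sum_divide_distrib[symmetric] algebra_simps)
qed

lemma sum_squares_lin_comb_eq_quad_form_gram:
  fixes x :: "nat \<Rightarrow> nat \<Rightarrow> real"
  shows "(\<Sum>l<n. (\<Sum>r<k. c r * x l (s r))\<^sup>2) = real n * quad_form {..<k} (gram n s x) c"
proof -
  have "(\<Sum>l<n. (\<Sum>r<k. c r * x l (s r))\<^sup>2)
      = (\<Sum>l<n. \<Sum>r<k. \<Sum>q<k. c r * c q * (x l (s r) * x l (s q)))"
    by (simp add: power2_eq_square sum_product algebra_simps)
  also have "\<dots> = (\<Sum>r<k. \<Sum>q<k. c r * c q * (\<Sum>l<n. x l (s r) * x l (s q)))"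
    by (simp add: sum_distrib_left sum.swap[of _ "{..<n}"])
  also have "\<dots> = (\<Sum>r<k. \<Sum>q<k. real n * (gram n s x r q * c r * c q))"
    by (intro sum.cong refl) (cases "n = 0", simp_all add: gram_def)
  also have "\<dots> = real n * quad_form {..<k} (gram n s x) c"
    by (simp add: quad_form_def sum_distrib_left)
  finally show ?thesis .
qed

locale well_conditioned_design =
  fixes n k :: nat and s :: "nat \<Rightarrow> nat" and S :: "nat set" and x :: "nat \<Rightarrow> nat \<Rightarrow> real"
    and lmin :: real
  assumes n_ge_1: "n \<ge> 1" and lmin_pos: "lmin > 0" and enum: "bij_betw s {..<k} S"
    and eigenvalues_ge: "\<And>\<mu>. eigenvalue_on S (\<lambda>i j. (\<Sum>l<n. x l i * x l j) / real n) \<mu> \<Longrightarrow> lmin \<le> \<mu>"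
begin

lemma quad_form_gram_ge: "lmin * (\<Sum>i<k. (u i)\<^sup>2) \<le> quad_form {..<k} (gram n s x) u"
proof (rule quad_form_ge_if_eigenvalues_ge)
  fix \<mu> assume "eigenvalue_on {..<k} (gram n s x) \<mu>"
  then show "lmin \<le> \<mu>"
    by (intro eigenvalues_ge eigenvalue_on_reindex[OF enum]) (simp add: gram_def[abs_def])
qed (simp_all add: gram_sym)

lemma gram_kernel_trivial:
  assumes "\<forall>i<k. (\<Sum>r<k. gram n s x i r * u r) = 0"
  shows "\<forall>i<k. u i = 0"
proof -
  have "lmin * (\<Sum>i<k. (u i)\<^sup>2) \<le> 0"
    using quad_form_gram_ge[of u] assms by (simp add: quad_form_eq_inner)
  then have "(\<Sum>i<k. (u i)\<^sup>2) = 0"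
    using lmin_pos by (simp add: mult_le_0_iff order_antisym sum_nonneg)
  then show ?thesis by (simp add: sum_squares_eq_0_iff)
qed

lemma det_gram_mat_nonzero: "det (gram_mat n s k x) \<noteq> 0"
proof
  assume "det (gram_mat n s k x) = 0"
  then obtain v where v: "v \<in> carrier_vec k" "v \<noteq> 0\<^sub>v k" "gram_mat n s k x *\<^sub>v v = 0\<^sub>v k"
    using det_0_iff_vec_prod_zero[OF gram_mat_carrier] by blast
  have "(\<Sum>r<k. gram n s x i r * v $ r) = (gram_mat n s k x *\<^sub>v v) $ i" if "i < k" for i
    using that v(1) by (simp add: gram_mat_def scalar_prod_def atLeast0LessThan)
  then have "\<forall>i<k. v $ i = 0"
    using v(3) gram_kernel_trivial[of "\<lambda>r. v $ r"] by simp
  then have "v = 0\<^sub>v k" using v(1) by (intro eq_vecI) auto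
  then show False using v(2) by simp
qed

lemma sum_squares_ls_weight_le:
  assumes "i < k"
  shows "(\<Sum>l<n. (ls_weight n s k x i l)\<^sup>2) \<le> 1 / (real n * lmin)"
proof -
  define u where "u = gram_inv n s k x i"
  have Gu: "(\<Sum>r<k. gram n s x a r * u r) = (if a = i then 1 else 0)" if "a < k" for a
    using gram_inv_gram[OF det_gram_mat_nonzero assms that] gram_sym
    by (simp add: u_def mult.commute)
  have "quad_form {..<k} (gram n s x) u = (\<Sum>a<k. u a * (if a = i then 1 else 0))"
    unfolding quad_form_eq_inner by (intro sum.cong) (simp_all add: Gu)
  then have Qu: "quad_form {..<k} (gram n s x) u = u i"
    using assms by (simp add: if_distrib cong: if_cong)
  have "(u i)\<^sup>2 \<le> (\<Sum>a<k. (u a)\<^sup>2)" using assms by (intro member_le_sum) auto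
  then have "lmin * (u i)\<^sup>2 \<le> lmin * (\<Sum>a<k. (u a)\<^sup>2)" using lmin_pos by simp
  also have "\<dots> \<le> u i" using quad_form_gram_ge[of u] Qu by simp
  finally have quadratic: "lmin * (u i)\<^sup>2 \<le> u i" .
  have ui: "u i \<le> 1 / lmin"
  proof (cases "u i > 0")
    case True
    then show ?thesis using quadratic lmin_pos by (simp add: field_simps power2_eq_square)
  next
    case False
    moreover have "0 < 1 / lmin" using lmin_pos by simp
    ultimately show ?thesis by linarith
  qed
  have "(\<Sum>l<n. (ls_weight n s k x i l)\<^sup>2) = (\<Sum>l<n. (\<Sum>r<k. u r * x l (s r))\<^sup>2) / (real n)\<^sup>2"
    unfolding ls_weight_def u_def power_divide sum_divide_distrib[symmetric] ..
  also have "\<dots> = u i / real n"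
    using n_ge_1 by (simp add: sum_squares_lin_comb_eq_quad_form_gram Qu power2_eq_square[of "real n"])
  also have "\<dots> \<le> 1 / (real n * lmin)"
    using divide_right_mono[OF ui, of "real n"] by (simp add: mult.commute)
  finally show ?thesis .
qed

lemma enum_mem: "r < k \<Longrightarrow> s r \<in> S"
  using enum by (auto simp: bij_betw_def)

lemma enum_cases:
  assumes "j \<in> S"
  obtains r where "r < k" "j = s r"
  using enum assms by (auto simp: bij_betw_def)

lemma sum_enum: "(\<Sum>j\<in>S. f j) = (\<Sum>r<k. f (s r))"
  using sum.reindex_bij_betw[OF enum] by (metis lessThan_def)

lemma columns_independent:
  assumes "(\<Sum>l<n. (\<Sum>j\<in>S. x l j * d j)\<^sup>2) = 0"
  shows "\<forall>j\<in>S. d j = 0"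
proof -
  have "real n * quad_form {..<k} (gram n s x) (\<lambda>r. d (s r)) = 0"
    using assms sum_squares_lin_comb_eq_quad_form_gram[where c="\<lambda>r. d (s r)"]
    by (simp add: sum_enum mult.commute)
  then have "lmin * (\<Sum>r<k. (d (s r))\<^sup>2) \<le> 0"
    using quad_form_gram_ge[of "\<lambda>r. d (s r)"] n_ge_1 by simp
  then have "(\<Sum>r<k. (d (s r))\<^sup>2) = 0"
    using lmin_pos by (simp add: mult_le_0_iff order_antisym sum_nonneg)
  then show ?thesis by (auto simp: sum_squares_eq_0_iff elim: enum_cases)
qed

lemma gram_ls_weight_noise:
  assumes "a < k"
  shows "(\<Sum>r<k. gram n s x a r * (\<Sum>l<n. ls_weight n s k x r l * e l)) = (\<Sum>l<n. x l (s a) * e l) / real n"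
proof -
  define c where "c = (\<lambda>q. (\<Sum>l<n. x l (s q) * e l) / real n)"
  have "(\<Sum>l<n. ls_weight n s k x r l * e l)
      = (\<Sum>l<n. \<Sum>q<k. gram_inv n s k x r q * (x l (s q) * e l / real n))" for r
    unfolding ls_weight_def by (simp add: sum_divide_distrib sum_distrib_right mult.assoc)
  also have "\<dots> r = (\<Sum>q<k. gram_inv n s k x r q * c q)" for r
    unfolding c_def by (subst sum.swap) (simp add: sum_distrib_left sum_divide_distrib)
  finally have "(\<Sum>r<k. gram n s x a r * (\<Sum>l<n. ls_weight n s k x r l * e l))
      = (\<Sum>r<k. \<Sum>q<k. gram n s x a r * gram_inv n s k x r q * c q)"
    by (simp add: sum_distrib_left mult.assoc)
  also have "\<dots> = (\<Sum>q<k. (\<Sum>r<k. gram n s x a r * gram_inv n s k x r q) * c q)"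
    by (subst sum.swap) (simp add: sum_distrib_right)
  also have "\<dots> = (\<Sum>q<k. if q = a then c q else 0)"
    using assms by (intro sum.cong) (simp_all add: gram_gram_inv[OF det_gram_mat_nonzero])
  also have "\<dots> = c a" using assms by simp
  finally show ?thesis by (simp add: c_def)
qed

text \<open>Since \<open>Y = X\<^sub>S \<beta>\<^sub>S + \<epsilon>\<close>, the least squares coefficients are \<open>\<beta>\<^sub>S + (X\<^sub>S\<^sup>T X\<^sub>S)\<^sup>-\<^sup>1 X\<^sub>S\<^sup>T \<epsilon>\<close>;
  they are identified through the normal equations.\<close>
lemma ls_coef_error:
  fixes beta e :: "nat \<Rightarrow> real"
  assumes supp: "\<And>j. j \<notin> S \<Longrightarrow> beta j = 0" and S_sub: "S \<subseteq> {..<p}" and "i < k"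
  shows "ls_coef n S x (\<lambda>l. (\<Sum>j<p. x l j * beta j) + e l) (s i) - beta (s i)
       = (\<Sum>l<n. ls_weight n s k x i l * e l)"
proof -
  define Y where "Y = (\<lambda>l. (\<Sum>j<p. x l j * beta j) + e l)"
  define W where "W = (\<lambda>r. \<Sum>l<n. ls_weight n s k x r l * e l)"
  define t where "t = inv_into {..<k} s"
  define b0 where "b0 = (\<lambda>j. if j \<in> S then beta j + W (t j) else 0)"
  have ts: "t (s r) = r" if "r < k" for r
    unfolding t_def using enum that by (simp add: bij_betw_def inv_into_f_f)
  have "(\<Sum>j<p. x l j * beta j) = (\<Sum>r<k. x l (s r) * beta (s r))" for l
    using S_sub supp by (simp add: sum.mono_neutral_right[of "{..<p}" S] sum_enum)
  then have residual: "Y l - (\<Sum>j\<in>S. x l j * b0 j) = e l - (\<Sum>r<k. x l (s r) * W r)" for l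
    unfolding Y_def sum_enum using enum_mem ts by (simp add: b0_def sum.distrib algebra_simps)
  have normal: "(\<Sum>l<n. x l j * (Y l - (\<Sum>j'\<in>S. x l j' * b0 j'))) = 0" if "j \<in> S" for j
  proof -
    obtain a where a: "a < k" "j = s a" using \<open>j \<in> S\<close> by (rule enum_cases)
    have "(\<Sum>l<n. x l (s a) * (\<Sum>r<k. x l (s r) * W r)) = (\<Sum>r<k. \<Sum>l<n. x l (s a) * x l (s r) * W r)"
      by (subst sum.swap) (simp add: sum_distrib_left mult.assoc)
    also have "\<dots> = real n * (\<Sum>r<k. gram n s x a r * W r)"
      unfolding sum_distrib_left using n_ge_1 by (intro sum.cong refl) (simp add: gram_def sum_distrib_right)
    finally show ?thesis
      using gram_ls_weight_noise[OF a(1), of e] n_ge_1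
      by (simp add: a(2) residual W_def right_diff_distrib sum_subtractf)
  qed
  have "ls_coef n S x Y = b0"
    by (rule ls_coef_eq_of_normal_equations[OF _ normal columns_independent]) (simp add: b0_def)
  then show ?thesis using assms(3) enum_mem ts by (simp add: Y_def b0_def W_def)
qed

lemma ls_error_gt_imp_weighted_noise_gt:
  fixes beta e :: "nat \<Rightarrow> real"
  assumes supp: "\<And>j. j \<notin> S \<Longrightarrow> beta j = 0" and S_sub: "S \<subseteq> {..<p}" and "S \<noteq> {}"
    and gt: "t < Max ((\<lambda>j. \<bar>ls_coef n S x (\<lambda>l. (\<Sum>j<p. x l j * beta j) + e l) j - beta j\<bar>) ` S)"
  shows "\<exists>i<k. (\<Sum>l<n. (ls_weight n s k x i l)\<^sup>2) \<le> 1 / (real n * lmin) \<and>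
               t < \<bar>\<Sum>l<n. ls_weight n s k x i l * e l\<bar>"
proof -
  have "finite S" using S_sub finite_subset by blast
  then obtain j where "j \<in> S" and j: "t < \<bar>ls_coef n S x (\<lambda>l. (\<Sum>j<p. x l j * beta j) + e l) j - beta j\<bar>"
    using gt \<open>S \<noteq> {}\<close> by (auto simp: Max_gr_iff)
  obtain i where i: "i < k" "j = s i" using \<open>j \<in> S\<close> by (rule enum_cases)
  then have "t < \<bar>\<Sum>l<n. ls_weight n s k x i l * e l\<bar>"
    using j ls_coef_error[where beta=beta and e=e, OF supp S_sub i(1)] by simp
  then show ?thesis using sum_squares_ls_weight_le[OF i(1)] i(1) by blast
qed

end

lemma borel_measurable_det_mat:
  assumes "\<And>a b. a < m \<Longrightarrow> b < m \<Longrightarrow> (\<lambda>z. h z (a, b)) \<in> borel_measurable N"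
  shows "(\<lambda>z. det (mat m m (h z)) :: real) \<in> borel_measurable N"
proof -
  have "det (mat m m (h z)) = (\<Sum>p\<in>{p. p permutes {0..<m}}. signof p * (\<Prod>i\<in>{0..<m}. h z (i, p i)))" for z
    unfolding det_def by (auto intro!: sum.cong prod.cong simp: permutes_in_image)
  moreover have "(\<lambda>z. h z (i, p i)) \<in> borel_measurable N" if "p permutes {0..<m}" "i \<in> {0..<m}" for p i
    using that by (intro assms) (auto simp: permutes_in_image)
  ultimately show ?thesis
    by (simp only:) (intro borel_measurable_sum borel_measurable_times borel_measurable_prod
        borel_measurable_const; simp)
qed

lemma borel_measurable_adj_mat:
  assumes g: "\<And>a b. a < k \<Longrightarrow> b < k \<Longrightarrow> (\<lambda>z. g z (a, b)) \<in> borel_measurable N"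
    and "i < k" "r < k"
  shows "(\<lambda>z. adj_mat (mat k k (g z)) $$ (i, r) :: real) \<in> borel_measurable N"
proof -
  define del where "del = (\<lambda>a b. (if a < r then a else Suc a, if b < i then b else Suc b))"
  have "adj_mat (mat k k (g z)) $$ (i, r) =
      (-1) ^ (r + i) * det (mat (k - 1) (k - 1) (\<lambda>(a, b). mat k k (g z) $$ del a b))" for z
    using assms(2,3) unfolding del_def by (simp add: adj_mat_def cofactor_def mat_delete_def)
  moreover have "(\<lambda>z. case (a, b) of (a, b) \<Rightarrow> mat k k (g z) $$ del a b) \<in> borel_measurable N"
    if "a < k - 1" "b < k - 1" for a b
    using that by (simp add: del_def) (auto intro!: g)
  ultimately show ?thesis
    by (simp only:) (intro borel_measurable_times borel_measurable_const borel_measurable_det_mat)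
qed

lemma borel_measurable_ls_weight:
  assumes f: "\<And>l r. l < n \<Longrightarrow> r < k \<Longrightarrow> (\<lambda>z. f z l (s r)) \<in> borel_measurable N"
    and "i < k" "l < n"
  shows "(\<lambda>z. ls_weight n s k (f z) i l) \<in> borel_measurable N"
proof -
  have gram: "(\<lambda>z. gram n s (f z) a b) \<in> borel_measurable N" if "a < k" "b < k" for a b
    unfolding gram_def using that f by measurable
  have gram_inv: "(\<lambda>z. gram_inv n s k (f z) i r) \<in> borel_measurable N" if "r < k" for r
    unfolding gram_inv_def gram_mat_def
    using that assms(2) gram
    by (intro borel_measurable_divide borel_measurable_adj_mat borel_measurable_det_mat) auto
  show ?thesis
    unfolding ls_weight_def using gram_inv f assms(3)
    by (intro borel_measurable_divide borel_measurable_sum borel_measurable_times borel_measurable_const)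
      auto
qed

lemma ls_weight_cong:
  assumes "\<And>l r. l < n \<Longrightarrow> r < k \<Longrightarrow> x l (s r) = x' l (s r)" "l < n"
  shows "ls_weight n s k x i l = ls_weight n s k x' i l"
proof -
  have "gram n s x a b = gram n s x' a b" if "a < k" "b < k" for a b
    unfolding gram_def using assms(1) that by (intro arg_cong[where f="\<lambda>t. t / real n"] sum.cong) auto
  then have "gram_mat n s k x = gram_mat n s k x'"
    unfolding gram_mat_def by (intro eq_matI) auto
  then show ?thesis using assms by (simp add: ls_weight_def gram_inv_def)
qed

lemma nn_integral_exp_weighted_sum_le:
  fixes M :: "'i \<Rightarrow> real measure" and c :: "'i \<Rightarrow> real"
  assumes "product_prob_space M" and "finite J"
    and mgf: "\<And>i t. i \<in> J \<Longrightarrow> integrable (M i) (\<lambda>x. exp (t * x)) \<and> (\<integral>x. exp (t * x) \<partial>M i) \<le> exp (\<sigma>\<^sup>2 * t\<^sup>2 / 2)"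
  shows "(\<integral>\<^sup>+y. ennreal (exp (\<Sum>i\<in>J. c i * y i)) \<partial>PiM J M) \<le> ennreal (exp (\<sigma>\<^sup>2 * (\<Sum>i\<in>J. (c i)\<^sup>2) / 2))"
proof -
  interpret product_prob_space M by fact
  have "(\<lambda>x. exp (c i * x)) \<in> borel_measurable (M i)" if "i \<in> J" for i
    using mgf[OF that, of "c i"] by auto
  then have meas: "(\<lambda>x. ennreal (exp (c i * x))) \<in> borel_measurable (M i)" if "i \<in> J" for i
    using that by measurable
  have "(\<integral>\<^sup>+y. ennreal (exp (\<Sum>i\<in>J. c i * y i)) \<partial>PiM J M) = (\<integral>\<^sup>+y. (\<Prod>i\<in>J. ennreal (exp (c i * y i))) \<partial>PiM J M)"
    using assms(2) by (simp add: exp_sum prod_ennreal)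
  also have "\<dots> = (\<Prod>i\<in>J. \<integral>\<^sup>+x. ennreal (exp (c i * x)) \<partial>M i)"
    using product_nn_integral_prod[OF assms(2) meas] by simp
  also have "\<dots> = (\<Prod>i\<in>J. ennreal (\<integral>x. exp (c i * x) \<partial>M i))"
    using mgf by (intro prod.cong refl nn_integral_eq_integral) auto
  also have "\<dots> \<le> (\<Prod>i\<in>J. ennreal (exp (\<sigma>\<^sup>2 * (c i)\<^sup>2 / 2)))"
    using mgf by (intro prod_mono_ennreal ennreal_leI) (simp add: power_mult_distrib)
  also have "\<dots> = ennreal (exp (\<sigma>\<^sup>2 * (\<Sum>i\<in>J. (c i)\<^sup>2) / 2))"
    using assms(2) by (simp add: prod_ennreal exp_sum sum_divide_distrib sum_distrib_left)
  finally show ?thesis .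
qed

lemma nn_integral_chernoff_weighted_sum_le:
  fixes M :: "'i \<Rightarrow> real measure" and c :: "'i \<Rightarrow> real"
  assumes "product_prob_space M" and sets_M: "\<And>i. sets (M i) = sets borel" and "finite B"
    and mgf: "\<And>i t. i \<in> B \<Longrightarrow> integrable (M i) (\<lambda>x. exp (t * x)) \<and> (\<integral>x. exp (t * x) \<partial>M i) \<le> exp (\<sigma>\<^sup>2 * t\<^sup>2 / 2)"
    and "(\<Sum>i\<in>B. (c i)\<^sup>2) \<le> V" "V > 0" "\<sigma> \<noteq> 0"
  shows "(\<integral>\<^sup>+y. ennreal (exp (t / (\<sigma>\<^sup>2 * V) * ((\<Sum>i\<in>B. c i * y i) - t))) \<partial>PiM B M)
      \<le> ennreal (exp (- t\<^sup>2 / (2 * \<sigma>\<^sup>2 * V)))"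
proof -
  define s where "s = t / (\<sigma>\<^sup>2 * V)"
  have "exp (s * ((\<Sum>i\<in>B. c i * y i) - t)) = exp (- s * t) * exp (\<Sum>i\<in>B. s * c i * y i)" for y
    by (simp add: exp_add[symmetric] sum_distrib_left algebra_simps)
  moreover have "(\<lambda>y. ennreal (exp (\<Sum>i\<in>B. s * c i * y i))) \<in> borel_measurable (PiM B M)"
    using measurable_component_singleton[of _ B M] by (simp add: measurable_cong_sets[OF refl sets_M])
  ultimately have "(\<integral>\<^sup>+y. ennreal (exp (s * ((\<Sum>i\<in>B. c i * y i) - t))) \<partial>PiM B M)
      = ennreal (exp (- s * t)) * (\<integral>\<^sup>+y. ennreal (exp (\<Sum>i\<in>B. s * c i * y i)) \<partial>PiM B M)"
    by (simp add: ennreal_mult nn_integral_cmult)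
  also have "\<dots> \<le> ennreal (exp (- s * t)) * ennreal (exp (\<sigma>\<^sup>2 * (\<Sum>i\<in>B. (s * c i)\<^sup>2) / 2))"
    using nn_integral_exp_weighted_sum_le[OF assms(1,3) mgf] by (intro mult_left_mono) auto
  also have "\<dots> \<le> ennreal (exp (- s * t)) * ennreal (exp (\<sigma>\<^sup>2 * (s\<^sup>2 * V) / 2))"
  proof -
    have "(\<Sum>i\<in>B. (s * c i)\<^sup>2) = s\<^sup>2 * (\<Sum>i\<in>B. (c i)\<^sup>2)"
      by (simp add: power_mult_distrib sum_distrib_left)
    also have "\<dots> \<le> s\<^sup>2 * V" using assms(5) by (simp add: mult_left_mono)
    finally show ?thesis by (intro mult_left_mono ennreal_leI) (auto intro: mult_left_mono)
  qed
  also have "\<dots> = ennreal (exp (- t\<^sup>2 / (2 * \<sigma>\<^sup>2 * V)))"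
    using assms(6,7) by (simp add: ennreal_mult[symmetric] exp_add[symmetric] s_def field_simps power2_eq_square)
  finally show ?thesis unfolding s_def .
qed

lemma PiM_weighted_sum_tail:
  fixes M :: "'i \<Rightarrow> real measure" and w :: "('i \<Rightarrow> real) \<Rightarrow> 'i \<Rightarrow> real"
  assumes "product_prob_space M" and sets_M: "\<And>i. sets (M i) = sets borel"
    and AB: "A \<inter> B = {}" "finite A" "finite B"
    and mgf: "\<And>i t. i \<in> B \<Longrightarrow> integrable (M i) (\<lambda>x. exp (t * x)) \<and> (\<integral>x. exp (t * x) \<partial>M i) \<le> exp (\<sigma>\<^sup>2 * t\<^sup>2 / 2)"
    and w_meas: "\<And>i. i \<in> B \<Longrightarrow> (\<lambda>x. w x i) \<in> borel_measurable (PiM A (\<lambda>_. borel))"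
    and "V > 0" "t > 0" "\<sigma> \<noteq> 0"
  defines "C \<equiv> {z \<in> space (PiM (A \<union> B) M). (\<Sum>i\<in>B. (w (restrict z A) i)\<^sup>2) \<le> V \<and>
                  t < (\<Sum>i\<in>B. w (restrict z A) i * z i)}"
  shows "C \<in> sets (PiM (A \<union> B) M)"
    and "emeasure (PiM (A \<union> B) M) C \<le> ennreal (exp (- t\<^sup>2 / (2 * \<sigma>\<^sup>2 * V)))"
proof -
  interpret product_prob_space M by fact
  have "(\<lambda>x. w x i) \<in> borel_measurable (PiM A M)" if "i \<in> B" for i
    using w_meas[OF that] by (simp add: measurable_cong_sets[OF sets_PiM_cong[OF refl sets_M] refl])
  then have w_restrict[measurable]: "(\<lambda>z. w (restrict z A) i) \<in> borel_measurable (PiM (A \<union> B) M)"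
    if "i \<in> B" for i
    using that by (intro measurable_compose[OF measurable_restrict_subset]) auto
  have [measurable]: "(\<lambda>z. z i) \<in> borel_measurable (PiM (A \<union> B) M)" if "i \<in> B" for i
    using that measurable_component_singleton[of i "A \<union> B" M] by (simp add: measurable_cong_sets[OF refl sets_M])
  define N where "N = (\<lambda>z. \<Sum>i\<in>B. (w (restrict z A) i)\<^sup>2)"
  define W where "W = (\<lambda>z. \<Sum>i\<in>B. w (restrict z A) i * z i)"
  have [measurable]: "N \<in> borel_measurable (PiM (A \<union> B) M)" "W \<in> borel_measurable (PiM (A \<union> B) M)"
    unfolding N_def W_def by measurable
  show "C \<in> sets (PiM (A \<union> B) M)"
    unfolding C_def N_def[symmetric] W_def[symmetric] by measurable
  define s where "s = t / (\<sigma>\<^sup>2 * V)"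
  have "s > 0" unfolding s_def using assms by simp
  \<comment> \<open>Chernoff: bound the indicator by \<open>exp (s (W - t))\<close> and integrate out the noise first.\<close>
  define F where "F = (\<lambda>z. ennreal (if N z \<le> V then exp (s * (W z - t)) else 0))"
  have [measurable]: "F \<in> borel_measurable (PiM (A \<union> B) M)"
    unfolding F_def by measurable
  have "emeasure (PiM (A \<union> B) M) C = (\<integral>\<^sup>+z. indicator C z \<partial>PiM (A \<union> B) M)"
    using \<open>C \<in> sets (PiM (A \<union> B) M)\<close> by simp
  also have "\<dots> \<le> (\<integral>\<^sup>+z. F z \<partial>PiM (A \<union> B) M)"
  proof (rule nn_integral_mono)
    fix z
    have "1 \<le> exp (s * (W z - t))" if "t < W z" using that \<open>s > 0\<close> by simp
    then show "indicator C z \<le> F z"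
      by (auto simp: C_def F_def N_def W_def indicator_def)
  qed
  also have "\<dots> = (\<integral>\<^sup>+x. (\<integral>\<^sup>+y. F (merge A B (x, y)) \<partial>PiM B M) \<partial>PiM A M)"
    using AB by (intro product_nn_integral_fold) simp_all
  also have "\<dots> \<le> (\<integral>\<^sup>+x. ennreal (exp (- t\<^sup>2 / (2 * \<sigma>\<^sup>2 * V))) \<partial>PiM A M)"
  proof (rule nn_integral_mono)
    fix x assume x: "x \<in> space (PiM A M)"
    have "restrict (merge A B (x, y)) A = x" for y
      using x by (auto simp: merge_def restrict_def space_PiM PiE_def extensional_def)
    moreover have "merge A B (x, y) i = y i" if "i \<in> B" for y i
      using that AB(1) by (auto simp: merge_def)
    ultimately have F_merge: "F (merge A B (x, y)) =
        ennreal (if (\<Sum>i\<in>B. (w x i)\<^sup>2) \<le> V then exp (s * ((\<Sum>i\<in>B. w x i * y i) - t)) else 0)" for y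
      by (simp add: F_def N_def W_def)
    show "(\<integral>\<^sup>+y. F (merge A B (x, y)) \<partial>PiM B M) \<le> ennreal (exp (- t\<^sup>2 / (2 * \<sigma>\<^sup>2 * V)))"
      using nn_integral_chernoff_weighted_sum_le[OF assms(1) sets_M AB(3) mgf _ assms(8,10), of "w x"]
      by (cases "(\<Sum>i\<in>B. (w x i)\<^sup>2) \<le> V") (simp_all add: F_merge s_def)
  qed
  also have "\<dots> = ennreal (exp (- t\<^sup>2 / (2 * \<sigma>\<^sup>2 * V)))"
  proof -
    have "prob_space (PiM A M)" by (intro prob_space_PiM M.prob_space_axioms)
    then show ?thesis by (simp add: prob_space.emeasure_space_1)
  qed
  finally show "emeasure (PiM (A \<union> B) M) C \<le> ennreal (exp (- t\<^sup>2 / (2 * \<sigma>\<^sup>2 * V)))" .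
qed

locale design_noise_model = prob_space +
  fixes Z :: "'i \<Rightarrow> 'a \<Rightarrow> real" and A B :: "'i set" and \<sigma> :: real
  assumes indep: "indep_vars (\<lambda>_. borel) Z (A \<union> B)"
    and disjoint: "A \<inter> B = {}" and finite_A: "finite A" and finite_B: "finite B"
    and sigma_nonzero: "\<sigma> \<noteq> 0"
    and noise_mgf: "\<And>i t. i \<in> B \<Longrightarrow> integrable M (\<lambda>\<omega>. exp (t * Z i \<omega>)) \<and>
                       (\<integral>\<omega>. exp (t * Z i \<omega>) \<partial>M) \<le> exp (\<sigma>\<^sup>2 * t\<^sup>2 / 2)"
begin

lemma Z_measurable: "i \<in> A \<union> B \<Longrightarrow> Z i \<in> borel_measurable M"
  using indep unfolding indep_vars_def by auto

text \<open>Outside \<open>A \<union> B\<close> the factors are point masses, so that the family is a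
  \<open>product_prob_space\<close>.\<close>
lemma distr_eq_product_model:
  obtains M' :: "'i \<Rightarrow> real measure" where "product_prob_space M'" and "\<And>i. sets (M' i) = sets borel"
    and "\<And>i t. i \<in> B \<Longrightarrow> integrable (M' i) (\<lambda>x. exp (t * x)) \<and> (\<integral>x. exp (t * x) \<partial>M' i) \<le> exp (\<sigma>\<^sup>2 * t\<^sup>2 / 2)"
    and "A \<union> B \<noteq> {} \<Longrightarrow> distr M (PiM (A \<union> B) (\<lambda>_. borel)) (\<lambda>\<omega>. \<lambda>i\<in>A \<union> B. Z i \<omega>) = PiM (A \<union> B) M'"
proof -
  define Z' where "Z' = (\<lambda>i. if i \<in> A \<union> B then Z i else (\<lambda>_. 0))"
  have Z'_meas: "Z' i \<in> borel_measurable M" for i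
    unfolding Z'_def using Z_measurable by auto
  have prod: "product_prob_space (\<lambda>i. distr M borel (Z' i))"
    unfolding product_prob_space_def product_prob_space_axioms_def product_sigma_finite_def
    by (simp add: prob_space_distr[OF Z'_meas] prob_space_imp_sigma_finite)
  have mgf: "integrable (distr M borel (Z' i)) (\<lambda>x. exp (t * x)) \<and>
      (\<integral>x. exp (t * x) \<partial>distr M borel (Z' i)) \<le> exp (\<sigma>\<^sup>2 * t\<^sup>2 / 2)" if "i \<in> B" for i t
    using noise_mgf[OF that, of t] that Z'_meas[of i]
    by (simp add: Z'_def integrable_distr_eq integral_distr)
  have "distr M (PiM (A \<union> B) (\<lambda>_. borel)) (\<lambda>\<omega>. \<lambda>i\<in>A \<union> B. Z i \<omega>)
      = PiM (A \<union> B) (\<lambda>i. distr M borel (Z' i))" if "A \<union> B \<noteq> {}"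
  proof -
    have "distr M (PiM (A \<union> B) (\<lambda>_. borel)) (\<lambda>\<omega>. \<lambda>i\<in>A \<union> B. Z i \<omega>)
        = PiM (A \<union> B) (\<lambda>i. distr M borel (Z i))"
      using indep_vars_iff_distr_eq_PiM'[where I="A \<union> B" and M'="\<lambda>_. borel" and X=Z]
        indep Z_measurable that by simp
    also have "\<dots> = PiM (A \<union> B) (\<lambda>i. distr M borel (Z' i))"
      by (intro PiM_cong) (simp_all add: Z'_def)
    finally show ?thesis .
  qed
  with prod mgf show thesis by (intro that) simp_all
qed

lemma weighted_noise_tail:
  fixes w :: "('i \<Rightarrow> real) \<Rightarrow> 'i \<Rightarrow> real"
  assumes w_meas: "\<And>i. i \<in> B \<Longrightarrow> (\<lambda>x. w x i) \<in> borel_measurable (PiM A (\<lambda>_. borel))"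
    and "V > 0" "t > 0"
  defines "E \<equiv> {\<omega> \<in> space M. (\<Sum>i\<in>B. (w (\<lambda>j\<in>A. Z j \<omega>) i)\<^sup>2) \<le> V \<and>
                  t < (\<Sum>i\<in>B. w (\<lambda>j\<in>A. Z j \<omega>) i * Z i \<omega>)}"
  shows "E \<in> events" and "prob E \<le> exp (- t\<^sup>2 / (2 * \<sigma>\<^sup>2 * V))"
proof -
  obtain M' :: "'i \<Rightarrow> real measure" where M': "product_prob_space M'" and sets_M': "\<And>i. sets (M' i) = sets borel"
    and mgf': "\<And>i t. i \<in> B \<Longrightarrow> integrable (M' i) (\<lambda>x. exp (t * x)) \<and> (\<integral>x. exp (t * x) \<partial>M' i) \<le> exp (\<sigma>\<^sup>2 * t\<^sup>2 / 2)"
    and distr: "A \<union> B \<noteq> {} \<Longrightarrow> distr M (PiM (A \<union> B) (\<lambda>_. borel)) (\<lambda>\<omega>. \<lambda>i\<in>A \<union> B. Z i \<omega>) = PiM (A \<union> B) M'"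
    using distr_eq_product_model by blast
  define Zr where "Zr = (\<lambda>\<omega>. \<lambda>i\<in>A \<union> B. Z i \<omega>)"
  have Zr_meas: "Zr \<in> measurable M (PiM (A \<union> B) (\<lambda>_. borel))"
    unfolding Zr_def using Z_measurable by (intro measurable_restrict) auto
  define C where "C = {z \<in> space (PiM (A \<union> B) M'). (\<Sum>i\<in>B. (w (restrict z A) i)\<^sup>2) \<le> V \<and>
                    t < (\<Sum>i\<in>B. w (restrict z A) i * z i)}"
  note tail = PiM_weighted_sum_tail[where w=w, OF M' sets_M' disjoint finite_A finite_B
      mgf' w_meas \<open>V > 0\<close> \<open>t > 0\<close> sigma_nonzero, folded C_def]
  have C_sets: "C \<in> sets (PiM (A \<union> B) (\<lambda>_. borel))"
    using tail(1) sets_PiM_cong[of "A \<union> B" "A \<union> B" M' "\<lambda>_. borel"] sets_M' by simp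
  have "Zr \<omega> \<in> space (PiM (A \<union> B) M')" for \<omega>
    using sets_eq_imp_space_eq[OF sets_M'] by (simp add: Zr_def space_PiM)
  then have E_eq: "E = Zr -` C \<inter> space M"
    unfolding E_def C_def by (auto simp: Zr_def)
  then show "E \<in> events"
    using measurable_sets[OF Zr_meas C_sets] by simp
  show "prob E \<le> exp (- t\<^sup>2 / (2 * \<sigma>\<^sup>2 * V))"
  proof (cases "B = {}")
    case True
    then show ?thesis using \<open>t > 0\<close> by (simp add: E_def)
  next
    case False
    then have "prob E = measure (PiM (A \<union> B) M') C"
      using measure_distr[OF Zr_meas C_sets] distr E_eq by (simp add: Zr_def)
    moreover have "prob_space (PiM (A \<union> B) M')"
      using M' by (simp add: product_prob_space_def product_prob_space_axioms_def prob_space_PiM)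
    ultimately show ?thesis
      using tail(2) by (simp add: prob_space_def finite_measure.emeasure_eq_measure)
  qed
qed

lemma weighted_noise_tail_abs:
  fixes w :: "('i \<Rightarrow> real) \<Rightarrow> 'i \<Rightarrow> real"
  assumes w_meas: "\<And>i. i \<in> B \<Longrightarrow> (\<lambda>x. w x i) \<in> borel_measurable (PiM A (\<lambda>_. borel))"
    and "V > 0" "t > 0"
  defines "E \<equiv> {\<omega> \<in> space M. (\<Sum>i\<in>B. (w (\<lambda>j\<in>A. Z j \<omega>) i)\<^sup>2) \<le> V \<and>
                  t < \<bar>\<Sum>i\<in>B. w (\<lambda>j\<in>A. Z j \<omega>) i * Z i \<omega>\<bar>}"
  shows "E \<in> events" and "prob E \<le> 2 * exp (- t\<^sup>2 / (2 * \<sigma>\<^sup>2 * V))"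
proof -
  note pos = weighted_noise_tail[where w=w, OF w_meas \<open>V > 0\<close> \<open>t > 0\<close>]
  note neg = weighted_noise_tail[where w="\<lambda>x i. - w x i", OF borel_measurable_uminus[OF w_meas]
      \<open>V > 0\<close> \<open>t > 0\<close>]
  have "E = {\<omega> \<in> space M. (\<Sum>i\<in>B. (w (\<lambda>j\<in>A. Z j \<omega>) i)\<^sup>2) \<le> V \<and>
                  t < (\<Sum>i\<in>B. w (\<lambda>j\<in>A. Z j \<omega>) i * Z i \<omega>)} \<union>
            {\<omega> \<in> space M. (\<Sum>i\<in>B. (- w (\<lambda>j\<in>A. Z j \<omega>) i)\<^sup>2) \<le> V \<and>
                  t < (\<Sum>i\<in>B. - w (\<lambda>j\<in>A. Z j \<omega>) i * Z i \<omega>)}"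
    unfolding E_def by (auto simp: sum_negf abs_if)
  then show "E \<in> events" and "prob E \<le> 2 * exp (- t\<^sup>2 / (2 * \<sigma>\<^sup>2 * V))"
    using pos neg measure_Un_le[OF pos(1) neg(1)] by simp_all
qed

end

lemma ls_weight_noise_tail:
  fixes M :: "'a measure" and X :: "nat \<Rightarrow> nat \<Rightarrow> 'a \<Rightarrow> real" and eps :: "nat \<Rightarrow> 'a \<Rightarrow> real"
  assumes "prob_space M"
    and indep: "prob_space.indep_vars M (\<lambda>_. borel)
           (\<lambda>i. case i of Inl (l, j) \<Rightarrow> X l j | Inr l \<Rightarrow> eps l)
           (({..<n} \<times> {..<p}) <+> {..<n})"
    and mgf: "\<forall>l<n. \<forall>t::real. integrable M (\<lambda>\<omega>. exp (t * eps l \<omega>)) \<and>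
           (\<integral>\<omega>. exp (t * eps l \<omega>) \<partial>M) \<le> exp (\<sigma>\<^sup>2 * t\<^sup>2 / 2)"
    and "\<sigma> \<noteq> 0" "V > 0" "t > 0" and s_lt: "\<And>r. r < k \<Longrightarrow> s r < p" and "i < k"
  defines "E \<equiv> {\<omega> \<in> space M. (\<Sum>l<n. (ls_weight n s k (\<lambda>l j. X l j \<omega>) i l)\<^sup>2) \<le> V \<and>
                  t < \<bar>\<Sum>l<n. ls_weight n s k (\<lambda>l j. X l j \<omega>) i l * eps l \<omega>\<bar>}"
  shows "E \<in> sets M" and "measure M E \<le> 2 * exp (- t\<^sup>2 / (2 * \<sigma>\<^sup>2 * V))"
proof -
  define Z :: "nat \<times> nat + nat \<Rightarrow> 'a \<Rightarrow> real" where
    "Z = (\<lambda>i. case i of Inl (l, j) \<Rightarrow> X l j | Inr l \<Rightarrow> eps l)"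
  define A :: "(nat \<times> nat + nat) set" where "A = Inl ` ({..<n} \<times> {..<p})"
  define B :: "(nat \<times> nat + nat) set" where "B = Inr ` {..<n}"
  have "design_noise_model M Z A B \<sigma>"
  proof (intro design_noise_model.intro design_noise_model_axioms.intro)
    have "A \<union> B = ({..<n} \<times> {..<p}) <+> {..<n}"
      by (auto simp: A_def B_def Plus_def)
    then show "prob_space.indep_vars M (\<lambda>_. borel) Z (A \<union> B)"
      using indep by (simp add: Z_def)
    fix b t assume "b \<in> B"
    then obtain l where "l < n" "b = Inr l" by (auto simp: B_def)
    then show "integrable M (\<lambda>\<omega>. exp (t * Z b \<omega>)) \<and> (\<integral>\<omega>. exp (t * Z b \<omega>) \<partial>M) \<le> exp (\<sigma>\<^sup>2 * t\<^sup>2 / 2)"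
      using mgf by (simp add: Z_def)
  qed (use assms(1,4) in \<open>auto simp: A_def B_def\<close>)
  then interpret design_noise_model M Z A B \<sigma> .
  define w :: "(nat \<times> nat + nat \<Rightarrow> real) \<Rightarrow> nat \<times> nat + nat \<Rightarrow> real" where
    "w = (\<lambda>z b. ls_weight n s k (\<lambda>l j. z (Inl (l, j))) i (projr b))"
  have w_meas: "(\<lambda>z. w z b) \<in> borel_measurable (PiM A (\<lambda>_. borel))" if "b \<in> B" for b
    unfolding w_def using that \<open>i < k\<close> s_lt
    by (intro borel_measurable_ls_weight measurable_component_singleton) (auto simp: A_def B_def)
  have "w (\<lambda>j\<in>A. Z j \<omega>) (Inr l) = ls_weight n s k (\<lambda>l j. X l j \<omega>) i l" if "l < n" for \<omega> l
    unfolding w_def sum.sel using that s_lt by (intro ls_weight_cong) (auto simp: A_def Z_def)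
  then have "E = {\<omega> \<in> space M. (\<Sum>b\<in>B. (w (\<lambda>j\<in>A. Z j \<omega>) b)\<^sup>2) \<le> V \<and>
                  t < \<bar>\<Sum>b\<in>B. w (\<lambda>j\<in>A. Z j \<omega>) b * Z b \<omega>\<bar>}"
    unfolding E_def B_def by (simp add: sum.reindex Z_def)
  then show "E \<in> sets M" and "measure M E \<le> 2 * exp (- t\<^sup>2 / (2 * \<sigma>\<^sup>2 * V))"
    using weighted_noise_tail_abs[where w=w, OF w_meas \<open>V > 0\<close> \<open>t > 0\<close>] by simp_all
qed

lemma subgaussian_exponent_eq:
  fixes p n :: nat and a \<sigma> lmin :: real
  assumes "p \<ge> 2" "n \<ge> 1" "1 + a \<ge> 0" "\<sigma> > 0" "lmin > 0"
  shows "exp (- (\<sigma> * (1 / sqrt lmin) * sqrt (2 * (1 + a) * ln (real p)) / sqrt (real n))\<^sup>2 /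
           (2 * \<sigma>\<^sup>2 * (1 / (real n * lmin)))) = 1 / real p powr (1 + a)"
proof -
  have L: "0 \<le> 2 * (1 + a) * ln (real p)" using assms by simp
  have "(\<sigma> * (1 / sqrt lmin) * sqrt (2 * (1 + a) * ln (real p)) / sqrt (real n))\<^sup>2
      = \<sigma>\<^sup>2 * (1 / lmin) * (2 * (1 + a) * ln (real p)) / real n"
    using assms by (simp add: power_mult_distrib power_divide real_sqrt_pow2[OF L])
  then have "(\<sigma> * (1 / sqrt lmin) * sqrt (2 * (1 + a) * ln (real p)) / sqrt (real n))\<^sup>2 /
           (2 * \<sigma>\<^sup>2 * (1 / (real n * lmin))) = (1 + a) * ln (real p)"
    using assms by (simp add: field_simps power2_eq_square)
  moreover have "exp (- ((1 + a) * ln (real p))) = 1 / real p powr (1 + a)"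
    using assms by (simp add: powr_def exp_minus inverse_eq_divide)
  ultimately show ?thesis by simp
qed

lemma (in finite_measure) measure_le_card_mult_if_cover:
  assumes "finite I" "A \<subseteq> (\<Union>i\<in>I. E i)"
    and "\<And>i. i \<in> I \<Longrightarrow> E i \<in> sets M" "\<And>i. i \<in> I \<Longrightarrow> measure M (E i) \<le> b"
  shows "measure M A \<le> real (card I) * b"
proof -
  have "measure M A \<le> measure M (\<Union>i\<in>I. E i)"
    using assms by (intro finite_measure_mono) auto
  also have "\<dots> \<le> (\<Sum>i\<in>I. measure M (E i))"
    using assms by (intro measure_UNION_le) auto
  also have "\<dots> \<le> real (card I) * b"
    using assms sum_bounded_above[of I "\<lambda>i. measure M (E i)" b] by simp
  finally show ?thesis .
qed

theorem lemma3:
  fixes M :: "'a measure"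
    and X :: "nat \<Rightarrow> nat \<Rightarrow> 'a \<Rightarrow> real"
    and eps :: "nat \<Rightarrow> 'a \<Rightarrow> real"
    and beta :: "nat \<Rightarrow> real"
    and S0 :: "nat set"
    and p n k :: nat
    and \<sigma> a lmax lmin lam :: real
  assumes "prob_space M"
    and "p \<ge> 2" and "n \<ge> 1" and "\<sigma> > 0" and "a > 0"
    and "\<forall>j\<ge>p. beta j = 0"
    and "S0 = {j. j < p \<and> beta j \<noteq> 0}"
    and "card S0 = k" and "k \<ge> 1"
    and indep: "prob_space.indep_vars M (\<lambda>_. borel)
           (\<lambda>i. case i of Inl (l, j) \<Rightarrow> X l j | Inr l \<Rightarrow> eps l)
           (({..<n} \<times> {..<p}) <+> {..<n})"
    and "\<forall>l<n. \<forall>j<p. integrable M (X l j) \<and> (\<integral>\<omega>. X l j \<omega> \<partial>M) = 0"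
    and "\<forall>l<n. \<forall>j<p. \<forall>t::real. integrable M (\<lambda>\<omega>. exp (t * X l j \<omega>)) \<and>
           (\<integral>\<omega>. exp (t * X l j \<omega>) \<partial>M) \<le> exp (t\<^sup>2 / 2)"
    and "\<forall>l<n. integrable M (eps l) \<and> (\<integral>\<omega>. eps l \<omega> \<partial>M) = 0"
    and "\<forall>l<n. \<forall>t::real. integrable M (\<lambda>\<omega>. exp (t * eps l \<omega>)) \<and>
           (\<integral>\<omega>. exp (t * eps l \<omega>) \<partial>M) \<le> exp (\<sigma>\<^sup>2 * t\<^sup>2 / 2)"
    and "lmax \<ge> lmin" and "lmin > 0" and "lam > 0"
  shows
    "let Y = (\<lambda>\<omega> l. (\<Sum>j<p. X l j \<omega> * beta j) + eps l \<omega>);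
         G = (\<lambda>\<omega> i j. (\<Sum>l<n. X l i \<omega> * X l j \<omega>) / real n);
         E_cond = (\<lambda>\<omega>. (\<exists>\<mu>. eigenvalue_on S0 (G \<omega>) \<mu> \<and> (\<mu> < lmin \<or> \<mu> > lmax)) \<or>
                        (\<Sum>l<n. (eps l \<omega>)\<^sup>2) / real n > \<sigma>\<^sup>2 * lam);
         \<tau> = sqrt (2 * (1 + a) * ln (real p));
         c0 = 1 / sqrt lmin;
         bhat = (\<lambda>\<omega>. ls_coef n S0 (\<lambda>l j. X l j \<omega>) (Y \<omega>));
         E_ls = (\<lambda>\<omega>. Max ((\<lambda>j. \<bar>bhat \<omega> j - beta j\<bar>) ` S0) > \<sigma> * c0 * \<tau> / sqrt (real n))
     in measure M {\<omega> \<in> space M. E_ls \<omega> \<and> \<not> E_cond \<omega>} \<le> 2 * real k / real p powr (1 + a)"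
proof -
  interpret prob_space M by fact
  have S0_sub: "S0 \<subseteq> {..<p}" using assms(7) by auto
  have S0_ne: "S0 \<noteq> {}" using assms(8,9) by auto
  have supp: "beta j = 0" if "j \<notin> S0" for j
    using that assms(6,7) by (cases "j < p") auto
  obtain s where enum: "bij_betw s {..<k} S0"
    using ex_bij_betw_nat_finite[OF finite_subset[OF S0_sub]] assms(8) by (auto simp: atLeast0LessThan)
  have s_lt: "s r < p" if "r < k" for r using enum that S0_sub by (auto simp: bij_betw_def)
  define t where "t = \<sigma> * (1 / sqrt lmin) * sqrt (2 * (1 + a) * ln (real p)) / sqrt (real n)"
  define V where "V = 1 / (real n * lmin)"
  define E where "E i = {\<omega> \<in> space M. (\<Sum>l<n. (ls_weight n s k (\<lambda>l j. X l j \<omega>) i l)\<^sup>2) \<le> V \<and>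
                  t < \<bar>\<Sum>l<n. ls_weight n s k (\<lambda>l j. X l j \<omega>) i l * eps l \<omega>\<bar>}" for i
  have "t > 0" "V > 0" using assms(2-5,16) by (auto simp: t_def V_def)
  have tail: "E i \<in> events \<and> prob (E i) \<le> 2 / real p powr (1 + a)" if "i < k" for i
    using ls_weight_noise_tail[OF assms(1) indep assms(14) _ \<open>V > 0\<close> \<open>t > 0\<close> s_lt that]
      subgaussian_exponent_eq[OF assms(2,3) _ assms(4,16), of a] assms(4,5)
    by (simp add: E_def t_def V_def)
  have incl: "\<omega> \<in> (\<Union>i<k. E i)" if "\<omega> \<in> space M"
    and gt: "t < Max ((\<lambda>j. \<bar>ls_coef n S0 (\<lambda>l j. X l j \<omega>) (\<lambda>l. (\<Sum>j<p. X l j \<omega> * beta j) + eps l \<omega>) j - beta j\<bar>) ` S0)"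
    and eig: "\<And>\<mu>. eigenvalue_on S0 (\<lambda>i j. (\<Sum>l<n. X l i \<omega> * X l j \<omega>) / real n) \<mu> \<Longrightarrow> lmin \<le> \<mu>"
    for \<omega>
  proof -
    have "well_conditioned_design n k s S0 (\<lambda>l j. X l j \<omega>) lmin"
      using assms(3,16) enum eig by unfold_locales
    from well_conditioned_design.ls_error_gt_imp_weighted_noise_gt[OF this supp S0_sub S0_ne gt]
    show ?thesis using that(1) by (auto simp: E_def V_def)
  qed
  show ?thesis
    unfolding Let_def t_def[symmetric]
    by (rule order_trans[OF measure_le_card_mult_if_cover[where I="{..<k}" and E=E and b="2 / real p powr (1 + a)"]])
      (use incl tail in \<open>auto simp: not_less mult.commute\<close>)
qed

end
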